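(* Let $P$ be a flasque pre-meadow with $\mathbf{a}$. For $x\in P$ let $J_x=\{0\cdot z\in 0\cdot P\mid x+0\cdot z\in P_{0\cdot z}^{\times}\}$. Then $J_x$ has a greatest element (with respect to the order on $0\cdot P$) for all $x\in P$ if and only if $J_x$ has a greatest element for all $x\in P_0$.
   Context: A pre-meadow is a structure $(P,+,-,\cdot,0,1)$ satisfying: $(x+y)+z=x+(y+z)$, $x+y=y+x$, $x+0=x$, $x+(-x)=0\cdot x$, $(xy)z=x(yz)$, $xy=yx$, $1\cdot x=x$, $x(y+z)=xy+xz$, $-(-x)=x$, $0\cdot(x+y)=0\cdot x\cdot y$. For $z\in 0\cdot P$ put $P_z:=\{x\in P\mid 0\cdot x=z\}$. $P$ is a pre-meadow with $\mathbf{a}$ if there is a unique $z\in 0\cdot P$ with $|P_z|=1$, denoted $\mathbf{a}$, and $x+\mathbf{a}=\mathbf{a}$ for all $x\in P$. Each $P_{0\cdot z}$ is a commutative ring with the induced operations (zero $0\cdot z$, unit $1+0\cdot z$), and $P_{0\cdot z}^{\times}$ denotes its group of units. The set $0\cdot P$ is ordered by $0\cdot z\le 0\cdot w$ iff $0\cdot z\cdot w=0\cdot z$ (so $0$ is greatest and $\mathbf{a}$ least). For $0\cdot z\le 0\cdot w$ the transition map $f_{0\cdot w,0\cdot z}:P_{0\cdot w}\to P_{0\cdot z}$ is $x\mapsto x+0\cdot z$. $P$ is flasque if all transition maps are surjective. *)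

theory Defs
  imports Main
begin

definition pre_meadow ::
  "('a \<Rightarrow> 'a \<Rightarrow> 'a) \<Rightarrow> ('a \<Rightarrow> 'a) \<Rightarrow> ('a \<Rightarrow> 'a \<Rightarrow> 'a) \<Rightarrow> 'a \<Rightarrow> 'a \<Rightarrow> bool" where
  "pre_meadow add neg mul zero one \<longleftrightarrow>
     (\<forall>x y z. add (add x y) z = add x (add y z)) \<and>
     (\<forall>x y. add x y = add y x) \<and>
     (\<forall>x. add x zero = x) \<and>
     (\<forall>x. add x (neg x) = mul zero x) \<and>
     (\<forall>x y z. mul (mul x y) z = mul x (mul y z)) \<and>
     (\<forall>x y. mul x y = mul y x) \<and>
     (\<forall>x. mul one x = x) \<and>
     (\<forall>x y z. mul x (add y z) = add (mul x y) (mul x z)) \<and>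
     (\<forall>x. neg (neg x) = x) \<and>
     (\<forall>x y. mul zero (add x y) = mul (mul zero x) y)"

definition zeroP :: "('a \<Rightarrow> 'a \<Rightarrow> 'a) \<Rightarrow> 'a \<Rightarrow> 'a set" where
  "zeroP mul zero = range (mul zero)"

definition Pz :: "('a \<Rightarrow> 'a \<Rightarrow> 'a) \<Rightarrow> 'a \<Rightarrow> 'a \<Rightarrow> 'a set" where
  "Pz mul zero z = {x. mul zero x = z}"

definition has_a :: "('a \<Rightarrow> 'a \<Rightarrow> 'a) \<Rightarrow> ('a \<Rightarrow> 'a \<Rightarrow> 'a) \<Rightarrow> 'a \<Rightarrow> bool" where
  "has_a add mul zero \<longleftrightarrow>
     (\<exists>z. z \<in> zeroP mul zero \<and> card (Pz mul zero z) = 1 \<and>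
          (\<forall>z'. z' \<in> zeroP mul zero \<and> card (Pz mul zero z') = 1 \<longrightarrow> z' = z) \<and>
          (\<forall>x. add x z = z))"

text \<open>Order on \<open>0\<cdot>P\<close>: \<open>0\<cdot>z \<le> 0\<cdot>w\<close> iff \<open>0\<cdot>z\<cdot>w = 0\<cdot>z\<close>; for elements
  z, w of \<open>0\<cdot>P\<close> (so \<open>z = 0\<cdot>z\<close>) this reads \<open>z\<cdot>w = z\<close>.\<close>
definition zle :: "('a \<Rightarrow> 'a \<Rightarrow> 'a) \<Rightarrow> 'a \<Rightarrow> 'a \<Rightarrow> bool" where
  "zle mul z w \<longleftrightarrow> mul z w = z"

text \<open>Units of the ring \<open>P_z\<close> (zero \<open>z\<close>, unit \<open>1 + z\<close>), for \<open>z \<in> 0\<cdot>P\<close>.\<close>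
definition units_Pz ::
  "('a \<Rightarrow> 'a \<Rightarrow> 'a) \<Rightarrow> ('a \<Rightarrow> 'a \<Rightarrow> 'a) \<Rightarrow> 'a \<Rightarrow> 'a \<Rightarrow> 'a \<Rightarrow> 'a set" where
  "units_Pz add mul zero one z =
     {x \<in> Pz mul zero z. \<exists>y \<in> Pz mul zero z. mul x y = add one z}"

definition flasque :: "('a \<Rightarrow> 'a \<Rightarrow> 'a) \<Rightarrow> ('a \<Rightarrow> 'a \<Rightarrow> 'a) \<Rightarrow> 'a \<Rightarrow> bool" where
  "flasque add mul zero \<longleftrightarrow>
     (\<forall>z \<in> zeroP mul zero. \<forall>w \<in> zeroP mul zero. zle mul z w \<longrightarrow>
        (\<lambda>x. add x z) ` Pz mul zero w = Pz mul zero z)"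

definition Jset ::
  "('a \<Rightarrow> 'a \<Rightarrow> 'a) \<Rightarrow> ('a \<Rightarrow> 'a \<Rightarrow> 'a) \<Rightarrow> 'a \<Rightarrow> 'a \<Rightarrow> 'a \<Rightarrow> 'a set" where
  "Jset add mul zero one x =
     {z \<in> zeroP mul zero. add x z \<in> units_Pz add mul zero one z}"

definition has_greatest :: "('a \<Rightarrow> 'a \<Rightarrow> 'a) \<Rightarrow> 'a set \<Rightarrow> bool" where
  "has_greatest mul J \<longleftrightarrow> (\<exists>g \<in> J. \<forall>j \<in> J. zle mul j g)"

end

theory Submission
  imports Defs
begin

text \<open>Flasqueness lifts every \<open>x\<close> along the transition map \<open>P\<^sub>0 \<rightarrow> P\<^sub>e\<close>, \<open>e = 0\<cdot>x\<close>, to some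
  \<open>x' \<in> P\<^sub>0\<close> with \<open>x = x' + e\<close>. For \<open>z \<le> e\<close> we have \<open>e + z = z\<close>, so \<open>x + z = x' + z\<close>, while every
  element of \<open>J\<^sub>x\<close> lies below \<open>e\<close>; hence \<open>J\<^sub>x = J\<^sub>x\<^sub>' \<inter> \<down>e\<close>. Transition maps are ring
  homomorphisms, so \<open>J\<^sub>x\<^sub>'\<close> is a down-set of \<open>0\<cdot>P\<close>, a meet-semilattice with meet \<open>\<cdot>\<close>.
  Therefore if \<open>g\<close> is the greatest element of \<open>J\<^sub>x\<^sub>'\<close>, then \<open>g\<cdot>e\<close> is the greatest element of \<open>J\<^sub>x\<close>.\<close>

locale premeadow =
  fixes add mul :: "'a \<Rightarrow> 'a \<Rightarrow> 'a" and neg :: "'a \<Rightarrow> 'a" and zero one :: 'a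
  assumes pre_meadow: "pre_meadow add neg mul zero one"
begin

abbreviation zeros :: "'a set" where
  "zeros \<equiv> zeroP mul zero"

abbreviation J :: "'a \<Rightarrow> 'a set" where
  "J x \<equiv> Jset add mul zero one x"

sublocale add: abel_semigroup add
  using pre_meadow unfolding pre_meadow_def by unfold_locales auto

sublocale mul: abel_semigroup mul
  using pre_meadow unfolding pre_meadow_def by unfold_locales auto

lemma add_zero_right: "add x zero = x"
  and add_neg: "add x (neg x) = mul zero x"
  and mul_one_left: "mul one x = x"
  and distrib_left: "mul x (add y z) = add (mul x y) (mul x z)"
  and neg_neg: "neg (neg x) = x"
  and zero_mul_add: "mul zero (add x y) = mul (mul zero x) y"
  using pre_meadow unfolding pre_meadow_def by auto

lemma distrib_right: "mul (add x y) z = add (mul x z) (mul y z)"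
  using distrib_left mul.commute by metis

lemma zero_mul_zero: "mul zero zero = zero"
  using zero_mul_add[of one zero] by (simp add: add_zero_right mul.commute mul_one_left)

lemma zero_mul_zero_mul: "mul zero (mul zero y) = mul zero y"
  by (simp add: mul.assoc[symmetric] zero_mul_zero)

lemma zero_mul_neg: "mul zero (neg x) = mul zero x"
  using add_neg[of x] add_neg[of "neg x"] by (simp add: neg_neg add.commute)

lemma zero_mul_mul_self: "mul (mul zero x) x = mul zero x"
proof -
  have "mul zero (mul zero (neg x)) = mul (mul zero (neg x)) x"
    using zero_mul_add[of "neg x" x] add_neg[of "neg x"] by (simp add: neg_neg)
  then show ?thesis
    by (simp add: zero_mul_zero_mul zero_mul_neg)
qed

lemma zeroP_zero: "zero \<in> zeros"
  unfolding zeroP_def using zero_mul_zero by (metis rangeI)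

lemma zero_mul_in_zeroP: "mul zero x \<in> zeros"
  unfolding zeroP_def by simp

lemma zero_mul_zeroP: "z \<in> zeros \<Longrightarrow> mul zero z = z"
  unfolding zeroP_def using zero_mul_zero_mul by auto

lemma zeroP_mul_closed: "z \<in> zeros \<Longrightarrow> mul z w \<in> zeros"
  unfolding zeroP_def using mul.assoc by auto

lemma zeroP_mul_idem: "z \<in> zeros \<Longrightarrow> mul z z = z"
  unfolding zeroP_def
  using zero_mul_mul_self zero_mul_zero_mul by (auto simp: mul.assoc mul.left_commute)

lemma zeroP_add_eq_mul:
  assumes "z \<in> zeros" "w \<in> zeros"
  shows "add z w = mul z w"
proof -
  obtain a b where ab: "z = mul zero a" "w = mul zero b"
    using assms unfolding zeroP_def by auto
  have "add (mul zero a) (mul zero b) = mul zero (add a b)"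
    by (rule distrib_left[symmetric])
  also have "\<dots> = mul (mul zero (mul zero a)) b"
    by (simp add: zero_mul_add zero_mul_zero_mul)
  also have "\<dots> = mul (mul zero a) (mul zero b)"
    by (metis mul.assoc mul.commute)
  finally show ?thesis
    unfolding ab .
qed

lemma zeroP_add_of_zle: "z \<in> zeros \<Longrightarrow> w \<in> zeros \<Longrightarrow> zle mul w z \<Longrightarrow> add z w = w"
  unfolding zle_def by (simp add: zeroP_add_eq_mul mul.commute)

lemma zeroP_zle_meet:
  "z \<in> zeros \<Longrightarrow> zle mul z v \<Longrightarrow> zle mul z w \<Longrightarrow> zle mul z (mul v w)"
  unfolding zle_def by (simp add: mul.assoc[symmetric])

lemma mul_eq_of_zle_zero_mul: "z \<in> zeros \<Longrightarrow> zle mul z (mul zero a) \<Longrightarrow> mul a z = z"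
  unfolding zle_def using zero_mul_zeroP by (metis mul.assoc mul.commute)

lemma zero_mul_add_of_zle: "zle mul z (mul zero a) \<Longrightarrow> mul zero (add a z) = z"
  unfolding zle_def by (simp add: zero_mul_add mul.commute)

lemma mul_add_zeroP:
  assumes z: "z \<in> zeros" and "zle mul z (mul zero a)" "zle mul z (mul zero b)"
  shows "mul (add a z) (add b z) = add (mul a b) z"
proof -
  have "mul a z = z" "mul z b = z"
    using assms mul_eq_of_zle_zero_mul mul.commute by metis+
  moreover have "add z z = z" "mul z z = z"
    using zeroP_add_eq_mul[OF z z] zeroP_mul_idem[OF z] by simp_all
  ultimately show ?thesis
    by (simp add: distrib_left distrib_right add.assoc)
qed

lemma Jset_zeroP: "z \<in> J x \<Longrightarrow> z \<in> zeros"
  unfolding Jset_def by simp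

lemma Jset_zle_zero_mul: "z \<in> J x \<Longrightarrow> zle mul z (mul zero x)"
  unfolding Jset_def units_Pz_def Pz_def zle_def by (auto simp: zero_mul_add mul.commute)

lemma Jset_down_closed:
  assumes "z \<in> J x" "w \<in> zeros" "zle mul w z"
  shows "w \<in> J x"
proof -
  have z: "z \<in> zeros" and xz: "mul zero (add x z) = z"
    using assms(1) unfolding Jset_def units_Pz_def Pz_def by auto
  obtain u where u: "mul zero u = z" and inv: "mul (add x z) u = add one z"
    using assms(1) unfolding Jset_def units_Pz_def Pz_def by auto
  have wz: "add z w = w"
    using zeroP_add_of_zle[OF z assms(2,3)] .
  have "zle mul w (mul zero (add x z))" "zle mul w (mul zero u)"
    using assms(3) xz u by simp_all
  then have "mul (add x w) (add u w) = add one w"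
    using mul_add_zeroP[OF assms(2)] inv wz by (metis add.assoc)
  moreover have "mul zero (add x w) = w" "mul zero (add u w) = w"
    using \<open>zle mul w (mul zero (add x z))\<close> \<open>zle mul w (mul zero u)\<close> wz
    by (metis add.assoc zero_mul_add_of_zle)+
  ultimately show ?thesis
    unfolding Jset_def units_Pz_def Pz_def using assms(2) by auto
qed

lemma Jset_add_zeroP:
  assumes e: "e \<in> zeros"
  shows "J (add x e) = {z \<in> J x. zle mul z e}"
proof -
  have shift: "add (add x e) z = add x z" if "z \<in> zeros" "zle mul z e" for z
    using zeroP_add_of_zle[OF e that] by (simp add: add.assoc)
  have below_e: "zle mul z e" if "z \<in> J (add x e)" for z
  proof -
    have "zle mul z (mul (mul zero x) e)"
      using Jset_zle_zero_mul[OF that] by (simp add: zero_mul_add)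
    then show ?thesis
      using zeroP_mul_idem[OF e] unfolding zle_def by (metis mul.assoc mul.commute)
  qed
  have "z \<in> J (add x e) \<longleftrightarrow> z \<in> J x \<and> zle mul z e" for z
  proof (cases "z \<in> zeros \<and> zle mul z e")
    case True
    then show ?thesis
      using shift unfolding Jset_def by auto
  next
    case False
    then show ?thesis
      using below_e Jset_zeroP by blast
  qed
  then show ?thesis
    by blast
qed

lemma has_greatest_zle_restrict:
  assumes "has_greatest mul A" "A \<subseteq> zeros"
    and down: "\<And>z w. z \<in> A \<Longrightarrow> w \<in> zeros \<Longrightarrow> zle mul w z \<Longrightarrow> w \<in> A"
    and e: "e \<in> zeros"
  shows "has_greatest mul {z \<in> A. zle mul z e}"
proof -
  obtain g where g: "g \<in> A" and greatest: "\<forall>z \<in> A. zle mul z g"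
    using assms(1) unfolding has_greatest_def by blast
  have g_zeros: "g \<in> zeros"
    using g assms(2) by blast
  have "mul g e \<in> zeros"
    using zeroP_mul_closed[OF g_zeros] .
  moreover have "zle mul (mul g e) g" "zle mul (mul g e) e"
    using zeroP_mul_idem[OF g_zeros] zeroP_mul_idem[OF e] unfolding zle_def
    by (metis mul.assoc mul.commute)+
  ultimately have "mul g e \<in> {z \<in> A. zle mul z e}"
    using down[OF g] by blast
  moreover have "zle mul z (mul g e)" if "z \<in> A" "zle mul z e" for z
    using zeroP_zle_meet that greatest assms(2) by blast
  ultimately show ?thesis
    unfolding has_greatest_def by blast
qed

lemma flasque_lift_to_Pz_zero:
  assumes "flasque add mul zero"
  obtains x' where "x' \<in> Pz mul zero zero" "x = add x' (mul zero x)"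
proof -
  have "zle mul (mul zero x) zero"
    unfolding zle_def by (metis mul.commute zero_mul_zero_mul)
  then have "(\<lambda>y. add y (mul zero x)) ` Pz mul zero zero = Pz mul zero (mul zero x)"
    using assms zero_mul_in_zeroP zeroP_zero unfolding flasque_def by blast
  moreover have "x \<in> Pz mul zero (mul zero x)"
    unfolding Pz_def by simp
  ultimately show ?thesis
    using that by (metis imageE)
qed

end

theorem theorem3p12:
  fixes add mul :: "'a \<Rightarrow> 'a \<Rightarrow> 'a" and neg :: "'a \<Rightarrow> 'a" and zero one :: 'a
  assumes "pre_meadow add neg mul zero one"
    and "has_a add mul zero"
    and "flasque add mul zero"
  shows "(\<forall>x. has_greatest mul (Jset add mul zero one x)) \<longleftrightarrow>
         (\<forall>x \<in> Pz mul zero zero. has_greatest mul (Jset add mul zero one x))"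
proof
  assume "\<forall>x. has_greatest mul (Jset add mul zero one x)"
  then show "\<forall>x \<in> Pz mul zero zero. has_greatest mul (Jset add mul zero one x)"
    by blast
next
  interpret premeadow add mul neg zero one
    using assms(1) by unfold_locales
  assume greatest_P0: "\<forall>x \<in> Pz mul zero zero. has_greatest mul (J x)"
  show "\<forall>x. has_greatest mul (J x)"
  proof
    fix x
    obtain x' where "x' \<in> Pz mul zero zero" and x: "x = add x' (mul zero x)"
      using flasque_lift_to_Pz_zero[OF assms(3)] .
    then have "has_greatest mul {z \<in> J x'. zle mul z (mul zero x)}"
      using greatest_P0 has_greatest_zle_restrict Jset_zeroP Jset_down_closed zero_mul_in_zeroP
      by blast
    then show "has_greatest mul (J x)"
      using Jset_add_zeroP[OF zero_mul_in_zeroP, of x' x] x by metis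
  qed
qed

end
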